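(* Assume (A1), (A2), let $\kappa\ge\max_{|\xi|\le\beta}|f_0'(\xi)|$, and let $u_0$, $g$ be as follows: $u_0\in\mathcal X$ with $|u_0|\le\beta$ on $\widehat\Omega$, and (Case (C1)) $g\in C([0,\infty);\partial X)$ with $g(0,\cdot)=u_0$ on $\Omega_c^*$ and $|g(t,x)|\le\beta$ for all $t\ge0$, $x\in\Omega_c^*$. For a time step $\tau>0$ and $t_n=n\tau$, define the ETD1 scheme: $v^0=u_0$ and, for $n\ge0$, $v^{n+1}=w^n(\tau)$, where $w^n:[0,\tau]\to\mathcal X$ solves $$w^n_s+\kappa w^n=\mathcal Lw^n+\mathcal N[v^n],\ s\in(0,\tau],\ x\in\Omega^*;\quad w^n(s,x)=g(t_n+s,x),\ s\in[0,\tau],\ x\in\Omega_c^*;\quad w^n(0,x)=v^n(x),\ x\in\widehat\Omega,$$ with $\mathcal N[w](x)=\kappa w(x)+f_0(w(x))$. Then for every $\tau>0$, $\|v^n\|\le\beta$ for all $n\ge0$. The same holds in Case (C2) (periodic $u_0$, no boundary equation).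
   Context: Domain setting: one of (D1) $\Omega\subset\mathbb{R}^d$ is open, connected, bounded with Lipschitz boundary $\partial\Omega$; $\Omega_c\subset\mathbb{R}^d$ is a closed connected set with $\Omega_c\cap\Omega=\emptyset$ and $\partial\Omega\subset\Omega_c$; (D2) (discrete) given sets $\tilde\Omega,\tilde\Omega_c$ as in (D1) and the finite set $\Sigma$ of nodes of a mesh of $\tilde\Omega\cup\tilde\Omega_c$, put $\Omega=\tilde\Omega\cap\Sigma$, $\partial\Omega=\partial\tilde\Omega\cap\Sigma$, $\Omega_c=\tilde\Omega_c\cap\Sigma$. In both cases $\overline\Omega=\Omega\cup\partial\Omega$, $\widehat\Omega=\Omega\cup\Omega_c$; if $\Omega_c=\partial\Omega$ set $\Omega^*=\Omega$, $\Omega_c^*=\partial\Omega$, otherwise $\Omega^*=\overline\Omega$, $\Omega_c^*=\Omega_c\setminus\partial\Omega$. For $D\subset\mathbb{R}^d$, $C(D)$ denotes the real functions on $D$ that are sequentially continuous relative to $D$ (every function on a discrete set is continuous), and $C_b(D)$ its bounded elements. Let $\mathcal X=C(\overline\Omega)$ if $\Omega_c=\partial\Omega$, and otherwise $\mathcal X=\{w:\widehat\Omega\to\mathbb R:\ w|_{\overline\Omega}\in C(\overline\Omega),\ w|_{\Omega_c^*}\in C_b(\Omega_c^* )\}$, with norm $\|w\|=\sup_{x\in\widehat\Omega}|w(x)|$. Boundary cases: (C1) $X=\{w|_{\Omega^*}: w\in\mathcal X,\ w|_{\Omega_c^*}=0\}$, identified (via zero extension) with the subspace $\{w\in\mathcal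 X: w|_{\Omega_c^*}=0\}$, and $\partial X=C_b(\Omega_c^* )$; (C2) (periodic) $\Omega=\prod_{i=1}^d(a_i,b_i)$ (in (D2), its node set), and $X$ consists of restrictions to $\overline\Omega_+=\prod_i(a_i,b_i]$ of continuous $\Omega$-periodic functions on $\mathbb R^d$ (resp. periodic grid functions), identified with these periodic functions. $X$ carries the sup norm. Operators: $\mathcal L:D(\mathcal L)\to C_b(\Omega^* )$ is linear with $D(\mathcal L)\subset\mathcal X$. In (D1), $D(\mathcal L_0)=\{w\in D(\mathcal L)\cap X:\ \mathcal L w\in X\}$; in (D2), $D(\mathcal L_0)=X$; $\mathcal L_0=\mathcal L|_{D(\mathcal L_0)}:D(\mathcal L_0)\to X$. Assumption (A1): (a) for every $w\in D(\mathcal L)$ and $x_0\in\Omega^*$ with $w(x_0)=\sup_{x\in\widehat\Omega}w(x)$, one has $\mathcal Lw(x_0)\le 0$; (b) $D(\mathcal L_0)$ is dense in $X$; (c) there exists $\lambda_0>0$ such that $\lambda_0\mathcal I-\mathcal L_0:D(\mathcal L_0)\to X$ is surjective. Assumption (A2): $f:C_b(\Omega^* )\to C_b(\Omega^* )$ is given by $f[w](x)=f_0(w(x))$ for a continuously differentiable $f_0:\mathbb R\to\mathbb R$, and there is $\beta>0$ with $f_0(\beta)\le 0\le f_0(-\beta)$. The linear problem defining $w^n$ has a unique solution, so the scheme is well defined. *)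

theory Defs
  imports "HOL-Analysis.Analysis"
begin

type_synonym ('d) pt = "real ^ 'd"

definition lipschitz_boundary :: "('d::finite) pt set \<Rightarrow> bool" where
  "lipschitz_boundary \<Omega> \<longleftrightarrow>
     (\<forall>p\<in>frontier \<Omega>. \<exists>r>0. \<exists>e \<phi> C. norm e = 1 \<and>
        lipschitz_on C {y. y \<bullet> e = 0} \<phi> \<and>
        \<Omega> \<inter> ball p r = {x \<in> ball p r. x \<bullet> e < \<phi> (x - (x \<bullet> e) *\<^sub>R e)})"

definition D1 :: "('d::finite) pt set \<Rightarrow> ('d::finite) pt set \<Rightarrow> bool" where
  "D1 \<Omega> \<Omega>c \<longleftrightarrow> open \<Omega> \<and> connected \<Omega> \<and> bounded \<Omega> \<and> lipschitz_boundary \<Omega> \<and>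
     closed \<Omega>c \<and> connected \<Omega>c \<and> \<Omega>c \<inter> \<Omega> = {} \<and> frontier \<Omega> \<subseteq> \<Omega>c"

text \<open>(D2): the node set of a mesh is modelled as a finite set of points of
the closed region.\<close>
definition D2 :: "('d::finite) pt set \<Rightarrow> ('d::finite) pt set \<Rightarrow> ('d::finite) pt set \<Rightarrow> bool" where
  "D2 \<Omega> bd \<Omega>c \<longleftrightarrow> (\<exists>\<Omega>t \<Omega>ct \<Sigma>. D1 \<Omega>t \<Omega>ct \<and> finite \<Sigma> \<and> \<Sigma> \<subseteq> \<Omega>t \<union> \<Omega>ct \<and>
       \<Omega> = \<Omega>t \<inter> \<Sigma> \<and> bd = frontier \<Omega>t \<inter> \<Sigma> \<and> \<Omega>c = \<Omega>ct \<inter> \<Sigma>)"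

definition domain_setting :: "bool \<Rightarrow> ('d::finite) pt set \<Rightarrow> ('d::finite) pt set \<Rightarrow> ('d::finite) pt set \<Rightarrow> bool" where
  "domain_setting disc \<Omega> bd \<Omega>c \<longleftrightarrow>
     (if disc then D2 \<Omega> bd \<Omega>c else D1 \<Omega> \<Omega>c \<and> bd = frontier \<Omega>)"

definition Ostar :: "('d::finite) pt set \<Rightarrow> ('d::finite) pt set \<Rightarrow> ('d::finite) pt set \<Rightarrow> ('d::finite) pt set" where
  "Ostar \<Omega> bd \<Omega>c = (if \<Omega>c = bd then \<Omega> else \<Omega> \<union> bd)"

definition Ocstar :: "('d::finite) pt set \<Rightarrow> ('d::finite) pt set \<Rightarrow> ('d::finite) pt set \<Rightarrow> ('d::finite) pt set" where
  "Ocstar \<Omega> bd \<Omega>c = (if \<Omega>c = bd then bd else \<Omega>c - bd)"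

definition Cb :: "'a::metric_space set \<Rightarrow> ('a \<Rightarrow> real) \<Rightarrow> bool" where
  "Cb S h \<longleftrightarrow> continuous_on S h \<and> bounded (h ` S)"

definition calX :: "('d::finite) pt set \<Rightarrow> ('d::finite) pt set \<Rightarrow> ('d::finite) pt set \<Rightarrow> (('d::finite) pt \<Rightarrow> real) set" where
  "calX \<Omega> bd \<Omega>c = {w. (\<forall>x. x \<notin> \<Omega> \<union> \<Omega>c \<longrightarrow> w x = 0) \<and> continuous_on (\<Omega> \<union> bd) w \<and>
       (\<Omega>c \<noteq> bd \<longrightarrow> Cb (Ocstar \<Omega> bd \<Omega>c) w)}"

text \<open>Case (C1). Outputs: \<open>\<Omega>\<^sup>*\<close>, \<open>\<Omega>\<^sub>c\<^sup>*\<close>, \<open>\<Omega>\<^sup>^\<close>, \<open>\<X>\<close>, and X (zero-extension identification).\<close>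
definition C1_setting :: "bool \<Rightarrow> ('d::finite) pt set \<Rightarrow> ('d::finite) pt set \<Rightarrow> ('d::finite) pt set \<Rightarrow>
     (('d::finite) pt \<Rightarrow> real) set \<Rightarrow> (('d::finite) pt \<Rightarrow> real) set \<Rightarrow> bool" where
  "C1_setting disc Os Ocs Oh XX X \<longleftrightarrow>
     (\<exists>\<Omega> bd \<Omega>c. domain_setting disc \<Omega> bd \<Omega>c \<and>
        Os = Ostar \<Omega> bd \<Omega>c \<and> Ocs = Ocstar \<Omega> bd \<Omega>c \<and> Oh = \<Omega> \<union> \<Omega>c \<and>
        XX = calX \<Omega> bd \<Omega>c \<and> X = {w \<in> XX. \<forall>x\<in>Ocs. w x = 0})"

definition hbox :: "('d::finite) pt \<Rightarrow> ('d::finite) pt \<Rightarrow> ('d::finite) pt set" where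
  "hbox a b = {x. \<forall>i. a $ i < x $ i \<and> x $ i \<le> b $ i}"

definition periodic_on_box :: "('d::finite) pt \<Rightarrow> ('d::finite) pt \<Rightarrow> (('d::finite) pt \<Rightarrow> real) \<Rightarrow> bool" where
  "periodic_on_box a b w \<longleftrightarrow> (\<forall>x i. w (x + (b $ i - a $ i) *\<^sub>R axis i 1) = w x)"

text \<open>Continuous version: X = continuous periodic functions on
  \<open>\<real>\<^sup>d\<close>, norm/evaluation on the half-open box.\<close>
definition C2_setting :: "bool \<Rightarrow> ('d::finite) pt set \<Rightarrow> ('d::finite) pt set \<Rightarrow> ('d::finite) pt set \<Rightarrow>
     (('d::finite) pt \<Rightarrow> real) set \<Rightarrow> (('d::finite) pt \<Rightarrow> real) set \<Rightarrow> bool" where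
  "C2_setting disc Os Ocs Oh XX X \<longleftrightarrow>
     (\<exists>a b. (\<forall>i. a $ i < b $ i) \<and> Ocs = {} \<and> Oh = Os \<and> XX = X \<and>
        (if disc then (\<exists>\<Sigma>. finite \<Sigma> \<and> \<Sigma> \<subseteq> cbox a b \<and> Os = \<Sigma> \<inter> hbox a b \<and>
                         X = {w. \<forall>x. x \<notin> Os \<longrightarrow> w x = 0})
         else Os = hbox a b \<and> X = {w. continuous_on UNIV w \<and> periodic_on_box a b w}))"

end

theory Submission
  imports Defs
begin

text \<open>Fix a step \<open>n\<close> and suppose \<open>|v\<^sup>n| \<le> \<beta>\<close>. Since \<open>|f\<^sub>0'| \<le> \<kappa>\<close> on \<open>[-\<beta>, \<beta>]\<close>, the map
\<open>\<xi> \<mapsto> \<kappa>\<xi> + f\<^sub>0(\<xi>)\<close> is nondecreasing there, so with \<open>f\<^sub>0(\<beta>) \<le> 0 \<le> f\<^sub>0(-\<beta>)\<close> the source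
term \<open>\<N>[v\<^sup>n]\<close> lies in \<open>[-\<kappa>\<beta>, \<kappa>\<beta>]\<close>. Then \<open>w\<^sup>n\<close> solves a linear problem with a source
bounded by \<open>\<kappa>\<beta>\<close>, boundary data and initial data bounded by \<open>\<beta>\<close>, and a maximum
principle in space and time keeps \<open>|w\<^sup>n| \<le> \<beta>\<close>: at the first time \<open>t\<close> where \<open>w\<^sup>n\<close> touches
the slightly tilted barrier \<open>\<beta> + \<epsilon>(1 + t)\<close>, the touching point is an interior
spatial maximum, where \<open>\<L>w\<^sup>n \<le> 0\<close> by (A1)(a) forces \<open>w\<^sup>n\<^sub>s \<le> 0\<close>, while touching from
below forces \<open>w\<^sup>n\<^sub>s \<ge> \<epsilon>\<close>.\<close>

definition has_max_on :: "('a \<Rightarrow> real) \<Rightarrow> 'a set \<Rightarrow> bool" where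
  "has_max_on h K \<longleftrightarrow> (K \<noteq> {} \<longrightarrow> (\<exists>x0\<in>K. \<forall>x\<in>K. h x \<le> h x0))"

lemma has_max_on_finite: "finite K \<Longrightarrow> has_max_on h K"
  unfolding has_max_on_def
proof (intro impI)
  assume "finite K" "K \<noteq> {}"
  then have "Max (h ` K) \<in> h ` K" by simp
  then obtain x0 where "x0 \<in> K" "h x0 = Max (h ` K)" by force
  then show "\<exists>x0\<in>K. \<forall>x\<in>K. h x \<le> h x0"
    using \<open>finite K\<close> by (intro bexI[of _ x0]) auto
qed

lemma has_max_on_compact: "compact K \<Longrightarrow> continuous_on K h \<Longrightarrow> has_max_on h K"
  unfolding has_max_on_def using continuous_attains_sup by blast

lemma periodic_on_box_shift_sum:
  fixes h :: "('d::finite) pt \<Rightarrow> real"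
  assumes "periodic_on_box a b h" "finite I"
  shows "h (y + (\<Sum>i\<in>I. (b$i - a$i) *\<^sub>R axis i 1)) = h y"
  using assms(2)
proof (induction I rule: finite_induct)
  case (insert i F)
  let ?y = "y + (\<Sum>i\<in>F. (b$i - a$i) *\<^sub>R axis i 1)"
  have "y + (\<Sum>i\<in>insert i F. (b$i - a$i) *\<^sub>R axis i 1) = ?y + (b$i - a$i) *\<^sub>R axis i 1"
    using insert by (simp add: algebra_simps)
  moreover have "h (?y + (b$i - a$i) *\<^sub>R axis i 1) = h ?y"
    using assms(1) unfolding periodic_on_box_def by blast
  ultimately show ?case using insert.IH by (simp add: add.assoc)
qed simp

lemma sum_axis_nth:
  "(\<Sum>i\<in>I. c i *\<^sub>R (axis i 1 :: real^'d::finite)) $ j = (if j \<in> I then c j else 0)"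
proof -
  have "\<And>i. c i * (if j = i then 1 else 0) = (if j = i then c i else 0)" by simp
  then show ?thesis by (simp add: axis_def)
qed

text \<open>A maximiser over the closed box is moved into the half-open box by shifting
each coordinate sitting on the lower face up by one period.\<close>
lemma has_max_on_periodic:
  fixes h :: "('d::finite) pt \<Rightarrow> real"
  assumes "continuous_on UNIV h" "periodic_on_box a b h" "\<forall>i. a$i < b$i"
  shows "has_max_on h (hbox a b)"
proof -
  have "a \<in> cbox a b" using assms(3) by (simp add: mem_box_cart less_imp_le)
  moreover have "continuous_on (cbox a b) h" using assms(1) by (rule continuous_on_subset) simp
  ultimately obtain y0 where y0: "y0 \<in> cbox a b" "\<forall>y\<in>cbox a b. h y \<le> h y0"
    using continuous_attains_sup[OF compact_cbox] by blast
  define y1 where "y1 = y0 + (\<Sum>i\<in>{i. y0$i = a$i}. (b$i - a$i) *\<^sub>R axis i 1)"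
  have "h y1 = h y0" unfolding y1_def using periodic_on_box_shift_sum[OF assms(2)] by simp
  moreover have "y1 \<in> hbox a b"
    unfolding hbox_def
  proof clarify
    fix i
    show "a $ i < y1 $ i \<and> y1 $ i \<le> b $ i"
      using y0(1) assms(3) unfolding y1_def vector_add_component sum_axis_nth
      by (auto simp: mem_box_cart dest!: spec[of _ i])
  qed
  moreover have "hbox a b \<subseteq> cbox a b" by (auto simp: hbox_def mem_box_cart less_imp_le)
  ultimately show ?thesis using y0(2) unfolding has_max_on_def by fastforce
qed

lemma C1_setting_max_set:
  assumes "C1_setting disc Os Ocs Oh XX X"
  shows "\<exists>K. Os \<subseteq> K \<and> K \<subseteq> Oh \<and> Oh \<subseteq> Os \<union> Ocs \<and>
    (\<forall>h\<in>XX. has_max_on h K \<and> has_max_on (\<lambda>x. - h x) K)"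
proof -
  obtain \<Omega> bd \<Omega>c where ds: "domain_setting disc \<Omega> bd \<Omega>c" and
    e: "Os = Ostar \<Omega> bd \<Omega>c" "Ocs = Ocstar \<Omega> bd \<Omega>c" "Oh = \<Omega> \<union> \<Omega>c" "XX = calX \<Omega> bd \<Omega>c"
    using assms unfolding C1_setting_def by blast
  have "bd \<subseteq> \<Omega>c"
    using ds unfolding domain_setting_def D2_def D1_def by (auto split: if_splits)
  then have chain: "Os \<subseteq> \<Omega> \<union> bd" "\<Omega> \<union> bd \<subseteq> Oh" "Oh \<subseteq> Os \<union> Ocs"
    using e by (auto simp: Ostar_def Ocstar_def)
  show ?thesis
  proof (cases disc)
    case True
    then obtain \<Sigma> where "finite \<Sigma>" "Oh \<subseteq> \<Sigma>"
      using ds e unfolding domain_setting_def D2_def by auto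
    then have "finite Oh" by (rule finite_subset[rotated])
    then show ?thesis using chain by (intro exI[of _ Oh]) (auto intro: has_max_on_finite)
  next
    case False
    then have "D1 \<Omega> \<Omega>c" "bd = frontier \<Omega>" using ds unfolding domain_setting_def by auto
    then have "compact (\<Omega> \<union> bd)"
      by (simp add: closure_Un_frontier[symmetric] compact_closure D1_def)
    moreover have "continuous_on (\<Omega> \<union> bd) h" if "h \<in> XX" for h
      using that e unfolding calX_def by auto
    ultimately show ?thesis using chain
      by (intro exI[of _ "\<Omega> \<union> bd"]) (auto intro!: has_max_on_compact continuous_intros)
  qed
qed

lemma C2_setting_max_set:
  assumes "C2_setting disc Os Ocs Oh XX X"
  shows "\<exists>K. Os \<subseteq> K \<and> K \<subseteq> Oh \<and> Oh \<subseteq> Os \<union> Ocs \<and>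
    (\<forall>h\<in>XX. has_max_on h K \<and> has_max_on (\<lambda>x. - h x) K)"
proof -
  obtain a b where ab: "\<forall>i. a $ i < b $ i" "Ocs = {}" "Oh = Os" "XX = X" and
     c: "if disc then (\<exists>\<Sigma>. finite \<Sigma> \<and> \<Sigma> \<subseteq> cbox a b \<and> Os = \<Sigma> \<inter> hbox a b \<and>
                         X = {w. \<forall>x. x \<notin> Os \<longrightarrow> w x = 0})
         else Os = hbox a b \<and> X = {w. continuous_on UNIV w \<and> periodic_on_box a b w}"
    using assms unfolding C2_setting_def by blast
  show ?thesis
  proof (cases disc)
    case True
    then have "finite Os" using c by auto
    then show ?thesis using ab by (intro exI[of _ Os]) (auto intro: has_max_on_finite)
  next
    case False
    then have Os: "Os = hbox a b" and X: "X = {w. continuous_on UNIV w \<and> periodic_on_box a b w}"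
      using c by auto
    have "has_max_on h Os \<and> has_max_on (\<lambda>x. - h x) Os" if "h \<in> XX" for h
    proof -
      have "continuous_on UNIV h" "periodic_on_box a b h" using that X ab by auto
      moreover from this have "continuous_on UNIV (\<lambda>x. - h x)" "periodic_on_box a b (\<lambda>x. - h x)"
        by (auto intro: continuous_intros simp: periodic_on_box_def)
      ultimately show ?thesis unfolding Os using ab(1) by (auto intro: has_max_on_periodic)
    qed
    then show ?thesis using ab by (intro exI[of _ Os]) auto
  qed
qed

lemma sup_above_boundary_attained:
  fixes h :: "'a \<Rightarrow> real"
  assumes K: "Os \<subseteq> K" "K \<subseteq> Oh" "Oh \<subseteq> Os \<union> Ocs" and "has_max_on h K"
    and bdry: "\<forall>x\<in>Ocs. h x \<le> \<beta>" and "\<beta> < c"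
    and le: "\<forall>x\<in>Oh. h x \<le> c" and sup: "\<forall>\<eta>>0. \<exists>x\<in>Oh. c - \<eta> < h x"
  shows "\<exists>x0\<in>Os. h x0 = c"
proof -
  have above_bdry: "y \<in> K" if "y \<in> Oh" "\<beta> < h y" for y
  proof -
    have "y \<notin> Ocs" using bdry that(2) by fastforce
    then show ?thesis using that(1) K(1,3) by blast
  qed
  have "0 < c - \<beta>" using \<open>\<beta> < c\<close> by simp
  then obtain x where "x \<in> Oh" "c - (c - \<beta>) < h x" using sup by blast
  then have "\<beta> < h x" "x \<in> Oh" by simp_all
  then have "K \<noteq> {}" using above_bdry by blast
  then obtain x0 where x0: "x0 \<in> K" "\<forall>y\<in>K. h y \<le> h x0"
    using \<open>has_max_on h K\<close> unfolding has_max_on_def by blast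
  have "c \<le> h x0"
  proof (rule ccontr)
    assume "\<not> c \<le> h x0"
    then have "0 < c - max (h x0) \<beta>" using \<open>\<beta> < c\<close> by simp
    then obtain y where "y \<in> Oh" "c - (c - max (h x0) \<beta>) < h y" using sup by blast
    then have "y \<in> Oh" "h x0 < h y" "\<beta> < h y" by simp_all
    moreover from this have "h y \<le> h x0" using above_bdry x0(2) by blast
    ultimately show False by simp
  qed
  moreover have "h x0 \<le> c" using le x0(1) K(2) by blast
  ultimately have "h x0 = c" by simp
  moreover have "x0 \<in> Os"
    using x0(1) K(2,3) bdry \<open>h x0 = c\<close> \<open>\<beta> < c\<close> by fastforce
  ultimately show ?thesis by blast
qed

definition unif_continuous_in_time :: "real set \<Rightarrow> 'a set \<Rightarrow> (real \<Rightarrow> 'a \<Rightarrow> real) \<Rightarrow> bool" where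
  "unif_continuous_in_time T A z \<longleftrightarrow>
     (\<forall>s\<in>T. \<forall>\<epsilon>>0. \<exists>\<delta>>0. \<forall>s'\<in>T. \<bar>s' - s\<bar> < \<delta> \<longrightarrow> (\<forall>x\<in>A. \<bar>z s' x - z s x\<bar> \<le> \<epsilon>))"

definition has_unif_time_derivative ::
    "real set \<Rightarrow> real set \<Rightarrow> 'a set \<Rightarrow> (real \<Rightarrow> 'a \<Rightarrow> real) \<Rightarrow> (real \<Rightarrow> 'a \<Rightarrow> real) \<Rightarrow> bool" where
  "has_unif_time_derivative T S A z zs \<longleftrightarrow>
     (\<forall>s\<in>S. \<forall>\<epsilon>>0. \<exists>\<delta>>0. \<forall>h. h \<noteq> 0 \<and> \<bar>h\<bar> < \<delta> \<and> s + h \<in> T \<longrightarrow>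
        (\<forall>x\<in>A. \<bar>(z (s + h) x - z s x) / h - zs s x\<bar> \<le> \<epsilon>))"

lemma unif_continuous_in_time_uminus:
  "unif_continuous_in_time T A z \<Longrightarrow> unif_continuous_in_time T A (\<lambda>s x. - z s x)"
  unfolding unif_continuous_in_time_def by (simp add: abs_minus_commute)

lemma has_unif_time_derivative_uminus:
  assumes "has_unif_time_derivative T S A z zs"
  shows "has_unif_time_derivative T S A (\<lambda>s x. - z s x) (\<lambda>s x. - zs s x)"
proof -
  have "\<And>a b d h::real. \<bar>(- a - - b) / h - - d\<bar> = \<bar>(a - b) / h - d\<bar>"
    by (simp add: abs_minus_commute diff_divide_distrib)
  then show ?thesis using assms unfolding has_unif_time_derivative_def by simp
qed

lemma time_derivative_ge_left_quotients:
  assumes "has_unif_time_derivative T S A z zs" "t \<in> S" "x \<in> A" "t' < t" "{t'..t} \<subseteq> T"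
    and quot: "\<And>s. s \<in> {t'..<t} \<Longrightarrow> c \<le> (z s x - z t x) / (s - t)"
  shows "c \<le> zs t x"
proof (rule field_le_epsilon)
  fix e :: real assume "0 < e"
  then obtain \<delta> where "0 < \<delta>" and \<delta>: "\<forall>h. h \<noteq> 0 \<and> \<bar>h\<bar> < \<delta> \<and> t + h \<in> T \<longrightarrow>
      \<bar>(z (t + h) x - z t x) / h - zs t x\<bar> \<le> e"
    using assms(1-3) unfolding has_unif_time_derivative_def by blast
  define h where "h = - min \<delta> (t - t') / 2"
  have h: "h \<noteq> 0" "\<bar>h\<bar> < \<delta>" "t + h \<in> {t'..<t}" "t + h - t = h"
    using \<open>0 < \<delta>\<close> \<open>t' < t\<close> unfolding h_def by (auto simp: min_def field_simps)
  moreover have "t + h \<in> T" using h(3) assms(5) by auto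
  ultimately have "\<bar>(z (t + h) x - z t x) / h - zs t x\<bar> \<le> e" using \<delta> by blast
  moreover have "c \<le> (z (t + h) x - z t x) / h" using quot[OF h(3)] h(4) by simp
  ultimately show "c \<le> zs t x + e" by linarith
qed

definition crossing_times :: "real \<Rightarrow> 'a set \<Rightarrow> (real \<Rightarrow> 'a \<Rightarrow> real) \<Rightarrow> (real \<Rightarrow> real) \<Rightarrow> real set" where
  "crossing_times \<tau> A z b = {s \<in> {0..\<tau>}. \<exists>x\<in>A. b s < z s x}"

lemma crossing_times_bdd_below: "bdd_below (crossing_times \<tau> A z b)"
  unfolding crossing_times_def by (rule bdd_belowI[of _ 0]) auto

lemma Inf_crossing_times_mem:
  "crossing_times \<tau> A z b \<noteq> {} \<Longrightarrow> Inf (crossing_times \<tau> A z b) \<in> {0..\<tau>}"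
  using crossing_times_bdd_below
  by (auto simp: crossing_times_def intro: cInf_greatest cInf_lower2)

lemma before_Inf_crossing_times:
  "s \<in> {0..\<tau>} \<Longrightarrow> s < Inf (crossing_times \<tau> A z b) \<Longrightarrow> x \<in> A \<Longrightarrow> z s x \<le> b s"
  using cInf_lower[OF _ crossing_times_bdd_below, of s \<tau> A z b]
  by (force simp: crossing_times_def)

lemma Inf_crossing_times_pos:
  assumes cont: "unif_continuous_in_time {0..\<tau>} A z"
    and init: "\<forall>x\<in>A. z 0 x \<le> \<beta>" and "\<beta> < b 0" and b0: "\<And>s. s \<in> {0..\<tau>} \<Longrightarrow> b 0 \<le> b s"
    and ne: "crossing_times \<tau> A z b \<noteq> {}"
  shows "0 < Inf (crossing_times \<tau> A z b)"
proof -
  have "0 \<in> {0..\<tau>}" using ne by (auto simp: crossing_times_def)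
  moreover have "0 < b 0 - \<beta>" using \<open>\<beta> < b 0\<close> by simp
  ultimately obtain \<delta> where "0 < \<delta>"
    and \<delta>: "\<forall>s\<in>{0..\<tau>}. \<bar>s - 0\<bar> < \<delta> \<longrightarrow> (\<forall>x\<in>A. \<bar>z s x - z 0 x\<bar> \<le> b 0 - \<beta>)"
    using cont unfolding unif_continuous_in_time_def by blast
  have "\<delta> \<le> s" if s: "s \<in> crossing_times \<tau> A z b" for s
  proof (rule ccontr)
    assume "\<not> \<delta> \<le> s"
    obtain x where x: "s \<in> {0..\<tau>}" "x \<in> A" "b s < z s x"
      using s unfolding crossing_times_def by blast
    then have "\<bar>s - 0\<bar> < \<delta>" using \<open>\<not> \<delta> \<le> s\<close> by simp
    then have "z s x - z 0 x \<le> b 0 - \<beta>" using \<delta> x(1,2) abs_le_D1 by blast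
    moreover have "z 0 x \<le> \<beta>" "b 0 \<le> b s" using init x(2) b0[OF x(1)] by auto
    ultimately show False using x(3) by linarith
  qed
  then show ?thesis using ne \<open>0 < \<delta>\<close> by (meson cInf_greatest less_le_trans)
qed

lemma at_Inf_crossing_times_le:
  assumes cont: "unif_continuous_in_time {0..\<tau>} A z" and mono: "mono_on {0..\<tau>} b"
    and ne: "crossing_times \<tau> A z b \<noteq> {}" and pos: "0 < Inf (crossing_times \<tau> A z b)"
  shows "\<forall>x\<in>A. z (Inf (crossing_times \<tau> A z b)) x \<le> b (Inf (crossing_times \<tau> A z b))"
proof
  let ?t = "Inf (crossing_times \<tau> A z b)"
  have t: "?t \<in> {0..\<tau>}" using Inf_crossing_times_mem[OF ne] .
  fix x assume "x \<in> A"
  show "z ?t x \<le> b ?t"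
  proof (rule ccontr)
    assume "\<not> z ?t x \<le> b ?t"
    then have "0 < (z ?t x - b ?t) / 2" by simp
    then obtain \<delta> where "0 < \<delta>"
      and \<delta>: "\<forall>s\<in>{0..\<tau>}. \<bar>s - ?t\<bar> < \<delta> \<longrightarrow> \<bar>z s x - z ?t x\<bar> \<le> (z ?t x - b ?t) / 2"
      using cont t \<open>x \<in> A\<close> unfolding unif_continuous_in_time_def by blast
    define s where "s = ?t - min \<delta> ?t / 2"
    have s: "s \<in> {0..\<tau>}" "\<bar>s - ?t\<bar> < \<delta>" "s < ?t"
      using \<open>0 < \<delta>\<close> pos t unfolding s_def by auto
    then have "b s \<le> b ?t" using mono t by (auto intro: mono_onD)
    moreover have "\<bar>z s x - z ?t x\<bar> \<le> (z ?t x - b ?t) / 2" using \<delta> s by blast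
    ultimately have "b s < z s x" using \<open>\<not> z ?t x \<le> b ?t\<close> unfolding abs_le_iff by (simp add: field_simps)
    then show False using before_Inf_crossing_times[OF s(1,3) \<open>x \<in> A\<close>] by linarith
  qed
qed

lemma at_Inf_crossing_times_approx:
  assumes cont: "unif_continuous_in_time {0..\<tau>} A z" and mono: "mono_on {0..\<tau>} b"
    and ne: "crossing_times \<tau> A z b \<noteq> {}" and "0 < \<eta>"
  shows "\<exists>x\<in>A. b (Inf (crossing_times \<tau> A z b)) - \<eta> < z (Inf (crossing_times \<tau> A z b)) x"
proof -
  let ?t = "Inf (crossing_times \<tau> A z b)"
  have t: "?t \<in> {0..\<tau>}" using Inf_crossing_times_mem[OF ne] .
  obtain \<delta> where "0 < \<delta>" and \<delta>: "\<forall>s\<in>{0..\<tau>}. \<bar>s - ?t\<bar> < \<delta> \<longrightarrow> (\<forall>x\<in>A. \<bar>z s x - z ?t x\<bar> \<le> \<eta>/2)"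
    using cont t \<open>0 < \<eta>\<close> unfolding unif_continuous_in_time_def by (meson half_gt_zero)
  obtain s where "s \<in> crossing_times \<tau> A z b" "s < ?t + \<delta>"
    using ne crossing_times_bdd_below \<open>0 < \<delta>\<close> by (meson cInf_less_iff less_add_same_cancel1)
  moreover from this obtain x where x: "s \<in> {0..\<tau>}" "x \<in> A" "b s < z s x"
    unfolding crossing_times_def by blast
  moreover have "?t \<le> s" using calculation(1) crossing_times_bdd_below by (rule cInf_lower)
  ultimately have "b ?t \<le> b s" "\<bar>z s x - z ?t x\<bar> \<le> \<eta>/2"
    using mono t \<delta> by (auto intro: mono_onD)
  then have "b ?t - \<eta> < z ?t x" using x \<open>0 < \<eta>\<close> unfolding abs_le_iff by (simp add: field_simps)
  then show ?thesis using x(2) by blast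
qed

lemma upper_bound_preserved:
  fixes z zs :: "real \<Rightarrow> 'a \<Rightarrow> real"
  assumes "0 \<le> \<kappa>"
    and K: "Os \<subseteq> K" "K \<subseteq> Oh" "Oh \<subseteq> Os \<union> Ocs"
    and max: "\<And>s. s \<in> {0<..\<tau>} \<Longrightarrow> has_max_on (z s) K"
    and init: "\<forall>x\<in>Oh. z 0 x \<le> \<beta>"
    and bdry: "\<And>s x. s \<in> {0..\<tau>} \<Longrightarrow> x \<in> Ocs \<Longrightarrow> z s x \<le> \<beta>"
    and cont: "unif_continuous_in_time {0..\<tau>} Oh z"
    and deriv: "has_unif_time_derivative {0..\<tau>} {0<..\<tau>} Os z zs"
    and at_max: "\<And>s x0. s \<in> {0<..\<tau>} \<Longrightarrow> x0 \<in> Os \<Longrightarrow> \<forall>x\<in>Oh. z s x \<le> z s x0 \<Longrightarrow>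
                   \<beta> < z s x0 \<Longrightarrow> zs s x0 + \<kappa> * z s x0 \<le> \<kappa> * \<beta>"
  shows "\<forall>s\<in>{0..\<tau>}. \<forall>x\<in>Oh. z s x \<le> \<beta>"
proof (rule ccontr)
  assume "\<not> ?thesis"
  then obtain s1 x1 where s1: "s1 \<in> {0..\<tau>}" "x1 \<in> Oh" "\<beta> < z s1 x1" by force
  define \<epsilon> where "\<epsilon> = (z s1 x1 - \<beta>) / (2 * (1 + s1))"
  define b where "b s = \<beta> + \<epsilon> * (1 + s)" for s
  define t where "t = Inf (crossing_times \<tau> Oh z b)"
  have "0 < \<epsilon>" using s1 by (simp add: \<epsilon>_def field_simps)
  then have b_mono: "mono_on {0..\<tau>} b" by (auto simp: mono_on_def b_def)
  have "\<epsilon> * (1 + s1) = (z s1 x1 - \<beta>) / 2" using s1 by (simp add: \<epsilon>_def field_simps)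
  then have "b s1 < z s1 x1" using s1 by (simp add: b_def field_simps)
  then have ne: "crossing_times \<tau> Oh z b \<noteq> {}" using s1 by (auto simp: crossing_times_def)
  have "0 < t" unfolding t_def
    using Inf_crossing_times_pos[OF cont init _ _ ne] \<open>0 < \<epsilon>\<close> b_mono by (auto simp: b_def)
  moreover have "t \<le> \<tau>" using Inf_crossing_times_mem[OF ne] by (simp add: t_def)
  ultimately have t: "t \<in> {0<..\<tau>}" by simp
  have "\<beta> < b t" using \<open>0 < \<epsilon>\<close> \<open>0 < t\<close> by (simp add: b_def)
  \<comment> \<open>The first touching point of the barrier is an interior maximum point of \<open>z t\<close>.\<close>
  obtain x0 where x0: "x0 \<in> Os" "z t x0 = b t"
    using sup_above_boundary_attained[OF K max[OF t], of \<beta> "b t"] bdry[of t] t \<open>\<beta> < b t\<close>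
      at_Inf_crossing_times_le[OF cont b_mono ne] at_Inf_crossing_times_approx[OF cont b_mono ne]
    unfolding t_def by fastforce
  have le: "\<forall>x\<in>Oh. z t x \<le> z t x0"
    using at_Inf_crossing_times_le[OF cont b_mono ne] \<open>0 < t\<close> x0(2) unfolding t_def by simp
  have "zs t x0 \<le> \<kappa> * \<beta> - \<kappa> * b t" using at_max[OF t x0(1) le] x0(2) \<open>\<beta> < b t\<close> by simp
  also have "\<dots> \<le> 0" using \<open>0 \<le> \<kappa>\<close> \<open>\<beta> < b t\<close> by (simp add: mult_left_mono)
  finally have "zs t x0 \<le> 0" .
  moreover have "\<epsilon> \<le> zs t x0"
  proof (rule time_derivative_ge_left_quotients[OF deriv t _ \<open>0 < t\<close>])
    show "x0 \<in> Os" "{0..t} \<subseteq> {0..\<tau>}" using x0(1) t by auto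
    fix s assume s: "s \<in> {0..<t}"
    then have "z s x0 \<le> b s"
      using before_Inf_crossing_times[of s \<tau> Oh z b x0] t x0(1) K unfolding t_def by auto
    then have "z s x0 - z t x0 \<le> \<epsilon> * (s - t)" using x0(2) by (simp add: b_def algebra_simps)
    then show "\<epsilon> \<le> (z s x0 - z t x0) / (s - t)" using s by (simp add: neg_le_divide_eq)
  qed
  ultimately show False using \<open>0 < \<epsilon>\<close> by linarith
qed

lemma abs_bound_preserved:
  fixes z zs :: "real \<Rightarrow> 'a \<Rightarrow> real"
  assumes "0 \<le> \<kappa>"
    and K: "Os \<subseteq> K" "K \<subseteq> Oh" "Oh \<subseteq> Os \<union> Ocs"
    and max: "\<And>s. s \<in> {0<..\<tau>} \<Longrightarrow> has_max_on (z s) K \<and> has_max_on (\<lambda>x. - z s x) K"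
    and init: "\<forall>x\<in>Oh. \<bar>z 0 x\<bar> \<le> \<beta>"
    and bdry: "\<And>s x. s \<in> {0..\<tau>} \<Longrightarrow> x \<in> Ocs \<Longrightarrow> \<bar>z s x\<bar> \<le> \<beta>"
    and cont: "unif_continuous_in_time {0..\<tau>} Oh z"
    and deriv: "has_unif_time_derivative {0..\<tau>} {0<..\<tau>} Os z zs"
    and at_max: "\<And>s x0. s \<in> {0<..\<tau>} \<Longrightarrow> x0 \<in> Os \<Longrightarrow> \<forall>x\<in>Oh. z s x \<le> z s x0 \<Longrightarrow>
                   \<beta> < z s x0 \<Longrightarrow> zs s x0 + \<kappa> * z s x0 \<le> \<kappa> * \<beta>"
    and at_min: "\<And>s x0. s \<in> {0<..\<tau>} \<Longrightarrow> x0 \<in> Os \<Longrightarrow> \<forall>x\<in>Oh. z s x0 \<le> z s x \<Longrightarrow>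
                   z s x0 < - \<beta> \<Longrightarrow> - (\<kappa> * \<beta>) \<le> zs s x0 + \<kappa> * z s x0"
  shows "\<forall>s\<in>{0..\<tau>}. \<forall>x\<in>Oh. \<bar>z s x\<bar> \<le> \<beta>"
proof -
  have "\<forall>s\<in>{0..\<tau>}. \<forall>x\<in>Oh. z s x \<le> \<beta>"
    by (rule upper_bound_preserved[OF \<open>0 \<le> \<kappa>\<close> K _ _ _ cont deriv at_max])
      (use max init bdry in \<open>auto simp: abs_le_iff\<close>)
  moreover have "\<forall>s\<in>{0..\<tau>}. \<forall>x\<in>Oh. - z s x \<le> \<beta>"
  proof (rule upper_bound_preserved[OF \<open>0 \<le> \<kappa>\<close> K, where zs = "\<lambda>s x. - zs s x"])
    show "unif_continuous_in_time {0..\<tau>} Oh (\<lambda>s x. - z s x)"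
      using cont by (rule unif_continuous_in_time_uminus)
    show "has_unif_time_derivative {0..\<tau>} {0<..\<tau>} Os (\<lambda>s x. - z s x) (\<lambda>s x. - zs s x)"
      using deriv by (rule has_unif_time_derivative_uminus)
    show "- zs s x0 + \<kappa> * - z s x0 \<le> \<kappa> * \<beta>"
      if "s \<in> {0<..\<tau>}" "x0 \<in> Os" "\<forall>x\<in>Oh. - z s x \<le> - z s x0" "\<beta> < - z s x0" for s x0
      using at_min[OF that(1,2)] that(3,4) by simp
  qed (use max init bdry in \<open>auto simp: abs_le_iff\<close>)
  ultimately show ?thesis by (simp add: abs_le_iff)
qed

lemma shifted_nonlinearity_mono:
  fixes f0 f0' :: "real \<Rightarrow> real"
  assumes deriv: "\<And>\<xi>. \<bar>\<xi>\<bar> \<le> \<beta> \<Longrightarrow> (f0 has_real_derivative f0' \<xi>) (at \<xi>)"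
    and \<kappa>: "\<And>\<xi>. \<bar>\<xi>\<bar> \<le> \<beta> \<Longrightarrow> \<bar>f0' \<xi>\<bar> \<le> \<kappa>"
    and "- \<beta> \<le> a" "a \<le> b" "b \<le> \<beta>"
  shows "\<kappa> * a + f0 a \<le> \<kappa> * b + f0 b"
proof (rule DERIV_nonneg_imp_nondecreasing[OF \<open>a \<le> b\<close>])
  fix x assume "a \<le> x" "x \<le> b"
  then have "\<bar>x\<bar> \<le> \<beta>" using assms(3,5) by simp
  then have "((\<lambda>\<xi>. \<kappa> * \<xi> + f0 \<xi>) has_real_derivative \<kappa> + f0' x) (at x)"
    using deriv by (auto intro!: derivative_eq_intros)
  moreover have "0 \<le> \<kappa> + f0' x" using \<kappa>[OF \<open>\<bar>x\<bar> \<le> \<beta>\<close>] by (simp add: abs_le_iff)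
  ultimately show "\<exists>y. ((\<lambda>\<xi>. \<kappa> * \<xi> + f0 \<xi>) has_real_derivative y) (at x) \<and> 0 \<le> y" by blast
qed

lemma shifted_nonlinearity_bound:
  fixes f0 f0' :: "real \<Rightarrow> real"
  assumes "\<And>\<xi>. \<bar>\<xi>\<bar> \<le> \<beta> \<Longrightarrow> (f0 has_real_derivative f0' \<xi>) (at \<xi>)"
    and "\<And>\<xi>. \<bar>\<xi>\<bar> \<le> \<beta> \<Longrightarrow> \<bar>f0' \<xi>\<bar> \<le> \<kappa>"
    and "f0 \<beta> \<le> 0" "0 \<le> f0 (- \<beta>)" and "\<bar>\<xi>\<bar> \<le> \<beta>"
  shows "\<bar>\<kappa> * \<xi> + f0 \<xi>\<bar> \<le> \<kappa> * \<beta>"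
proof -
  note mono = shifted_nonlinearity_mono[where \<beta> = \<beta>, OF assms(1,2)]
  have "\<kappa> * \<xi> + f0 \<xi> \<le> \<kappa> * \<beta> + f0 \<beta>" "\<kappa> * - \<beta> + f0 (- \<beta>) \<le> \<kappa> * \<xi> + f0 \<xi>"
    using mono[of \<xi> \<beta>] mono[of "- \<beta>" \<xi>] \<open>\<bar>\<xi>\<bar> \<le> \<beta>\<close> by (auto simp: abs_le_iff)
  then show ?thesis using assms(3,4) by (simp add: abs_le_iff)
qed

lemma nonneg_at_min_from_max_principle:
  fixes L :: "('a \<Rightarrow> real) \<Rightarrow> 'a \<Rightarrow> real"
  assumes zero: "(\<lambda>x. 0) \<in> DL"
    and lin: "\<And>w1 w2 c. w1 \<in> DL \<Longrightarrow> w2 \<in> DL \<Longrightarrow> (\<lambda>x. w1 x + c * w2 x) \<in> DL"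
    and L_lin: "\<And>w1 w2 c x. w1 \<in> DL \<Longrightarrow> w2 \<in> DL \<Longrightarrow> x \<in> Os \<Longrightarrow>
                  L (\<lambda>y. w1 y + c * w2 y) x = L w1 x + c * L w2 x"
    and max_principle: "\<And>z x0. z \<in> DL \<Longrightarrow> x0 \<in> Os \<Longrightarrow> \<forall>x\<in>Oh. z x \<le> z x0 \<Longrightarrow> L z x0 \<le> 0"
    and "z \<in> DL" "x0 \<in> Os" "\<forall>x\<in>Oh. z x0 \<le> z x"
  shows "0 \<le> L z x0"
proof -
  have "L (\<lambda>y. 0) x0 = 0" using L_lin[OF zero zero \<open>x0 \<in> Os\<close>, of 1] by simp
  moreover have "(\<lambda>y. 0 + (- 1) * z y) \<in> DL" by (rule lin[OF zero \<open>z \<in> DL\<close>])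
  then have "L (\<lambda>y. 0 + (- 1) * z y) x0 \<le> 0"
    using max_principle[OF _ \<open>x0 \<in> Os\<close>] \<open>\<forall>x\<in>Oh. z x0 \<le> z x\<close> by simp
  ultimately show ?thesis using L_lin[OF zero \<open>z \<in> DL\<close> \<open>x0 \<in> Os\<close>, of "- 1"] by simp
qed

lemma linear_problem_abs_bound:
  fixes z zs :: "real \<Rightarrow> 'a \<Rightarrow> real" and L :: "('a \<Rightarrow> real) \<Rightarrow> 'a \<Rightarrow> real"
  assumes "0 \<le> \<kappa>"
    and K: "Os \<subseteq> K" "K \<subseteq> Oh" "Oh \<subseteq> Os \<union> Ocs"
    and max: "\<And>s. s \<in> {0<..\<tau>} \<Longrightarrow> has_max_on (z s) K \<and> has_max_on (\<lambda>x. - z s x) K"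
    and zero: "(\<lambda>x. 0) \<in> DL"
    and lin: "\<And>w1 w2 c. w1 \<in> DL \<Longrightarrow> w2 \<in> DL \<Longrightarrow> (\<lambda>x. w1 x + c * w2 x) \<in> DL"
    and L_lin: "\<And>w1 w2 c x. w1 \<in> DL \<Longrightarrow> w2 \<in> DL \<Longrightarrow> x \<in> Os \<Longrightarrow>
                  L (\<lambda>y. w1 y + c * w2 y) x = L w1 x + c * L w2 x"
    and max_principle: "\<And>z x0. z \<in> DL \<Longrightarrow> x0 \<in> Os \<Longrightarrow> \<forall>x\<in>Oh. z x \<le> z x0 \<Longrightarrow> L z x0 \<le> 0"
    and z_DL: "\<And>s. s \<in> {0<..\<tau>} \<Longrightarrow> z s \<in> DL"
    and eq: "\<And>s x. s \<in> {0<..\<tau>} \<Longrightarrow> x \<in> Os \<Longrightarrow> zs s x + \<kappa> * z s x = L (z s) x + F x"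
    and source: "\<And>x. x \<in> Os \<Longrightarrow> \<bar>F x\<bar> \<le> \<kappa> * \<beta>"
    and init: "\<forall>x\<in>Oh. \<bar>z 0 x\<bar> \<le> \<beta>"
    and bdry: "\<And>s x. s \<in> {0..\<tau>} \<Longrightarrow> x \<in> Ocs \<Longrightarrow> \<bar>z s x\<bar> \<le> \<beta>"
    and cont: "unif_continuous_in_time {0..\<tau>} Oh z"
    and deriv: "has_unif_time_derivative {0..\<tau>} {0<..\<tau>} Os z zs"
  shows "\<forall>s\<in>{0..\<tau>}. \<forall>x\<in>Oh. \<bar>z s x\<bar> \<le> \<beta>"
proof (rule abs_bound_preserved[OF \<open>0 \<le> \<kappa>\<close> K max init bdry cont deriv])
  show "zs s x0 + \<kappa> * z s x0 \<le> \<kappa> * \<beta>"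
    if "s \<in> {0<..\<tau>}" "x0 \<in> Os" "\<forall>x\<in>Oh. z s x \<le> z s x0" for s x0
    using max_principle[OF z_DL[OF that(1)] that(2,3)] eq[OF that(1,2)]
      abs_le_D1[OF source[OF that(2)]] by linarith
  show "- (\<kappa> * \<beta>) \<le> zs s x0 + \<kappa> * z s x0"
    if "s \<in> {0<..\<tau>}" "x0 \<in> Os" "\<forall>x\<in>Oh. z s x0 \<le> z s x" for s x0
    using nonneg_at_min_from_max_principle[where DL = DL and L = L and Os = Os and Oh = Oh,
        OF zero lin L_lin max_principle z_DL[OF that(1)] that(2,3)]
      eq[OF that(1,2)] abs_le_D2[OF source[OF that(2)]] by linarith
qed

theorem theorem3p1:
  fixes Os Ocs Oh :: "('d::finite) pt set"
    and XX X DL DL0 :: "(('d::finite) pt \<Rightarrow> real) set"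
    and L :: "(('d::finite) pt \<Rightarrow> real) \<Rightarrow> (('d::finite) pt \<Rightarrow> real)"
    and f0 f0' :: "real \<Rightarrow> real"
    and \<beta> \<kappa> \<tau> :: real
    and u0 :: "('d::finite) pt \<Rightarrow> real"
    and g :: "real \<Rightarrow> ('d::finite) pt \<Rightarrow> real"
    and v :: "nat \<Rightarrow> ('d::finite) pt \<Rightarrow> real"
    and w ws :: "nat \<Rightarrow> real \<Rightarrow> ('d::finite) pt \<Rightarrow> real"
  assumes setting: "C1_setting disc Os Ocs Oh XX X \<or> C2_setting disc Os Ocs Oh XX X"
    and DL_sub: "DL \<subseteq> XX"
    and DL_zero: "(\<lambda>x. 0) \<in> DL"
    and DL_lin: "\<And>w1 w2 c. w1 \<in> DL \<Longrightarrow> w2 \<in> DL \<Longrightarrow> (\<lambda>x. w1 x + c * w2 x) \<in> DL"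
    and L_lin: "\<And>w1 w2 c x. w1 \<in> DL \<Longrightarrow> w2 \<in> DL \<Longrightarrow> x \<in> Os \<Longrightarrow>
                  L (\<lambda>y. w1 y + c * w2 y) x = L w1 x + c * L w2 x"
    and L_Cb: "\<And>w. w \<in> DL \<Longrightarrow> Cb Os (L w)"
    and DL0_def: "DL0 = (if disc then X else {z \<in> DL \<inter> X. \<exists>h\<in>X. \<forall>x\<in>Os. h x = L z x})"
    and disc_dom: "disc \<Longrightarrow> X \<subseteq> DL"
    and A1a: "\<And>z x0. z \<in> DL \<Longrightarrow> x0 \<in> Os \<Longrightarrow> (\<forall>x\<in>Oh. z x \<le> z x0) \<Longrightarrow> L z x0 \<le> 0"
    and A1b: "\<And>h \<epsilon>. h \<in> X \<Longrightarrow> \<epsilon> > 0 \<Longrightarrow> \<exists>z\<in>DL0. \<forall>x\<in>Oh. \<bar>h x - z x\<bar> \<le> \<epsilon>"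
    and A1c: "\<exists>lam0>0. \<forall>h\<in>X. \<exists>z\<in>DL0. \<forall>x\<in>Os. lam0 * z x - L z x = h x"
    and f0_deriv: "\<And>\<xi>. (f0 has_real_derivative f0' \<xi>) (at \<xi>)"
    and f0'_cont: "continuous_on UNIV f0'"
    and \<beta>_pos: "\<beta> > 0"
    and f0_\<beta>: "f0 \<beta> \<le> 0" "0 \<le> f0 (- \<beta>)"
    and \<kappa>: "\<And>\<xi>. \<bar>\<xi>\<bar> \<le> \<beta> \<Longrightarrow> \<bar>f0' \<xi>\<bar> \<le> \<kappa>"
    and u0_X: "u0 \<in> XX"
    and u0_bd: "\<And>x. x \<in> Oh \<Longrightarrow> \<bar>u0 x\<bar> \<le> \<beta>"
    and g_Cb: "\<And>t. t \<ge> 0 \<Longrightarrow> Cb Ocs (g t)"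
    and g_cont: "\<And>t \<epsilon>. t \<ge> 0 \<Longrightarrow> \<epsilon> > 0 \<Longrightarrow>
                  \<exists>\<delta>>0. \<forall>t'\<ge>0. \<bar>t' - t\<bar> < \<delta> \<longrightarrow> (\<forall>x\<in>Ocs. \<bar>g t' x - g t x\<bar> \<le> \<epsilon>)"
    and g_init: "\<And>x. x \<in> Ocs \<Longrightarrow> g 0 x = u0 x"
    and g_bd: "\<And>t x. t \<ge> 0 \<Longrightarrow> x \<in> Ocs \<Longrightarrow> \<bar>g t x\<bar> \<le> \<beta>"
    and \<tau>_pos: "\<tau> > 0"
    and v0: "v 0 = u0"
    and v_step: "\<And>n. v (Suc n) = w n \<tau>"
    and w_X: "\<And>n s. s \<in> {0..\<tau>} \<Longrightarrow> w n s \<in> XX"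
    and w_cont: "\<And>n s \<epsilon>. s \<in> {0..\<tau>} \<Longrightarrow> \<epsilon> > 0 \<Longrightarrow>
                  \<exists>\<delta>>0. \<forall>s'\<in>{0..\<tau>}. \<bar>s' - s\<bar> < \<delta> \<longrightarrow> (\<forall>x\<in>Oh. \<bar>w n s' x - w n s x\<bar> \<le> \<epsilon>)"
    and w_DL: "\<And>n s. s \<in> {0<..\<tau>} \<Longrightarrow> w n s \<in> DL"
    and w_deriv: "\<And>n s \<epsilon>. s \<in> {0<..\<tau>} \<Longrightarrow> \<epsilon> > 0 \<Longrightarrow>
                  \<exists>\<delta>>0. \<forall>h. h \<noteq> 0 \<and> \<bar>h\<bar> < \<delta> \<and> s + h \<in> {0..\<tau>} \<longrightarrow>
                     (\<forall>x\<in>Os. \<bar>(w n (s + h) x - w n s x) / h - ws n s x\<bar> \<le> \<epsilon>)"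
    and w_eq: "\<And>n s x. s \<in> {0<..\<tau>} \<Longrightarrow> x \<in> Os \<Longrightarrow>
                  ws n s x + \<kappa> * w n s x = L (w n s) x + (\<kappa> * v n x + f0 (v n x))"
    and w_bc: "\<And>n s x. s \<in> {0..\<tau>} \<Longrightarrow> x \<in> Ocs \<Longrightarrow> w n s x = g (real n * \<tau> + s) x"
    and w_init: "\<And>n x. x \<in> Oh \<Longrightarrow> w n 0 x = v n x"
  shows "\<forall>n. \<forall>x\<in>Oh. \<bar>v n x\<bar> \<le> \<beta>"
proof -
  have "\<exists>K. Os \<subseteq> K \<and> K \<subseteq> Oh \<and> Oh \<subseteq> Os \<union> Ocs \<and>
      (\<forall>h\<in>XX. has_max_on h K \<and> has_max_on (\<lambda>x. - h x) K)"
    using setting by (elim disjE) (erule C1_setting_max_set, erule C2_setting_max_set)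
  then obtain K where K: "Os \<subseteq> K" "K \<subseteq> Oh" "Oh \<subseteq> Os \<union> Ocs"
    and K_max: "\<And>h. h \<in> XX \<Longrightarrow> has_max_on h K \<and> has_max_on (\<lambda>x. - h x) K"
    by blast
  have "0 \<le> \<kappa>" using \<kappa>[of 0] \<beta>_pos by force
  have step: "\<forall>x\<in>Oh. \<bar>w n \<tau> x\<bar> \<le> \<beta>" if IH: "\<forall>x\<in>Oh. \<bar>v n x\<bar> \<le> \<beta>" for n
  proof -
    have "\<forall>s\<in>{0..\<tau>}. \<forall>x\<in>Oh. \<bar>w n s x\<bar> \<le> \<beta>"
    proof (rule linear_problem_abs_bound[OF \<open>0 \<le> \<kappa>\<close> K _ DL_zero DL_lin L_lin A1a w_DL w_eq])
      show "\<bar>\<kappa> * v n x + f0 (v n x)\<bar> \<le> \<kappa> * \<beta>" if "x \<in> Os" for x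
        using shifted_nonlinearity_bound[OF f0_deriv \<kappa> f0_\<beta>] IH K(1,2) that by blast
      show "unif_continuous_in_time {0..\<tau>} Oh (w n)"
        unfolding unif_continuous_in_time_def by (intro ballI allI impI w_cont)
      show "has_unif_time_derivative {0..\<tau>} {0<..\<tau>} Os (w n) (ws n)"
        unfolding has_unif_time_derivative_def by (intro ballI allI impI w_deriv)
      show "\<forall>x\<in>Oh. \<bar>w n 0 x\<bar> \<le> \<beta>" using w_init IH by simp
      show "\<bar>w n s x\<bar> \<le> \<beta>" if "s \<in> {0..\<tau>}" "x \<in> Ocs" for s x
        using w_bc[OF that] g_bd[OF _ that(2)] that(1) \<tau>_pos by simp
    qed (use K_max[OF w_X] in simp)
    then show ?thesis using \<tau>_pos by simp
  qed
  show ?thesis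
  proof
    fix n show "\<forall>x\<in>Oh. \<bar>v n x\<bar> \<le> \<beta>"
      by (induction n) (use v0 u0_bd step v_step in auto)
  qed
qed

end
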